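(* Let $\theta=(\tau,\ell)\in\mathscr S$, let $\eta\in\{0,1\}$, let $q=\Phi(\theta,\eta)$, and let $\gamma$ be a proper geodesic ray of $q$ emanating from $\varnothing$. Then: 1. If $c$ is a corner incident to $\gamma(i)$ lying on the left-hand side of $\tau$, then $c^{\gamma_{\max}}(i)\le c\le c^{\gamma_{\min}}(i)$. 2. For every $i\ge0$, the vertices $\gamma(i+1),\gamma(i+2),\dots$ do not belong to $[[\varnothing,\gamma(i)]]$. 3. For every $i\ge0$, if $\gamma(i)$ is incident to the left-hand side of $\tau$, then there exists a unique $j\le i$ such that $[[\varnothing,\gamma(i)]]$ contains $\gamma_{\min}(j)$ and $[[\gamma_{\min}(j),\gamma(i)]]\setminus\{\gamma_{\min}(j)\}$ does not intersect the spine of $\tau$.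
   Context: **The set $\mathscr S$.** It is the set of infinite labeled plane trees with root label 0, integer labels differing by at most 1 along edges, exactly one spine $\varnothing=S(0),S(1),\dots$, and $\inf_i\ell(S(i))=-\infty$. $[[a,b]]$ denotes the vertex set of the path from $a$ to $b$ in $\tau$. **Corners and sides.** The left-hand side of $\tau$ consists of the spine and the subtrees grafted to its left. Corners are indexed by $\mathbb Z$: $c_0,c_1,\dots$ are the left-side corners in clockwise contour order from the root corner $c_0$, and $c_{-1},c_{-2},\dots$ are the right-side corners in counterclockwise order. Corners are ordered by index. The successor $\mathcal S(c_i)$ is the first $c_j$, $j>i$, with $\ell(c_j)=\ell(c_i)-1$. $\mathcal V(c)$ is the vertex of corner $c$. **The quadrangulation $\Phi(\theta,\eta)$.** It has vertex set $V(\tau)$ and edges the arcs from each corner to its successor. It is rooted at the arc from $c_0$ to its successor, with orientation reversed iff $\eta=1$. **Proper geodesic rays.** A proper geodesic ray emanating from $\varnothing$ is an infinite path $(\gamma(0)=\varnothing,\gamma(1),\dots)$ with $\ell(\gamma(i))=-i$. Each of its steps from $\gamma(i)$ to $\gamma(i+1)$ is an arc from a corner $c^\gamma(i)$ incident to $\gamma(i)$ to its successor. **Maximal and minimal geodesics.** The maximal geodesic is $\gamma_{\max}(i)=\mathcal V(\mathcal S^{(i)}(c_0))$, with $c^{\gamma_{\max}}(i)=\mathcal S^{(i)}(c_0)$. The minimal geodesic is given by $\gamma_{\min}(0)=\varnothing$, where $c^{\gamma_{\min}}(n)$ is the last corner among $c_0,c_1,\dots$ incident to $\gamma_{\min}(n)$,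 and $\gamma_{\min}(n+1)=\mathcal V(\mathcal S(c^{\gamma_{\min}}(n)))$. *)

theory Defs
  imports Main "HOL-Library.Sublist"
begin

text \<open>A plane tree is a set of vertices encoded as finite words over nat
(the root is the empty word, the children of u are u@[0], u@[1], ...,
listed from left to right).  Trees are locally finite.\<close>

definition plane_tree :: "nat list set \<Rightarrow> bool" where
  "plane_tree \<tau> \<longleftrightarrow> [] \<in> \<tau>
     \<and> (\<forall>u v. u @ v \<in> \<tau> \<longrightarrow> u \<in> \<tau>)
     \<and> (\<forall>u i j. u @ [j] \<in> \<tau> \<longrightarrow> i < j \<longrightarrow> u @ [i] \<in> \<tau>)
     \<and> (\<forall>u \<in> \<tau>. finite {j. u @ [j] \<in> \<tau>})"

definition nch :: "nat list set \<Rightarrow> nat list \<Rightarrow> nat" where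
  "nch \<tau> u = card {j. u @ [j] \<in> \<tau>}"

definition labelling :: "nat list set \<Rightarrow> (nat list \<Rightarrow> int) \<Rightarrow> bool" where
  "labelling \<tau> lab \<longleftrightarrow> lab [] = 0 \<and> (\<forall>u j. u @ [j] \<in> \<tau> \<longrightarrow> \<bar>lab (u @ [j]) - lab u\<bar> \<le> 1)"

definition is_spine :: "nat list set \<Rightarrow> (nat \<Rightarrow> nat list) \<Rightarrow> bool" where
  "is_spine \<tau> S \<longleftrightarrow> S 0 = [] \<and> (\<forall>i. S i \<in> \<tau>) \<and> (\<forall>i. \<exists>j. S (Suc i) = S i @ [j])"

definition spine :: "nat list set \<Rightarrow> nat \<Rightarrow> nat list" where
  "spine \<tau> = (THE S. is_spine \<tau> S)"

definition in_SS :: "nat list set \<Rightarrow> (nat list \<Rightarrow> int) \<Rightarrow> bool" where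
  "in_SS \<tau> lab \<longleftrightarrow> plane_tree \<tau> \<and> labelling \<tau> lab \<and> (\<exists>!S. is_spine \<tau> S)
     \<and> (\<forall>M::int. \<exists>i. lab (spine \<tau> i) < M)"

text \<open>Clockwise contour state (v, j): the corner of v just before visiting child j
(all children < j already explored).\<close>
definition cwstep :: "nat list set \<Rightarrow> nat list \<times> nat \<Rightarrow> nat list \<times> nat" where
  "cwstep \<tau> s = (case s of (v, j) \<Rightarrow>
     if v @ [j] \<in> \<tau> then (v @ [j], 0) else (butlast v, Suc (last v)))"

text \<open>Counterclockwise contour state (v, m): the corner of v where the children
\<open>\<ge> m\<close> are already explored and child m-1 is visited next.\<close>
definition ccwstep :: "nat list set \<Rightarrow> nat list \<times> nat \<Rightarrow> nat list \<times> nat" where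
  "ccwstep \<tau> s = (case s of (v, m) \<Rightarrow>
     if 0 < m then (v @ [m - 1], nch \<tau> (v @ [m - 1])) else (butlast v, last v))"

text \<open>Corners are indexed by the integers: \<open>c_n\<close>, n \<ge> 0, are the left-side corners
in clockwise order from the root corner \<open>c_0\<close>; \<open>c_{-n}\<close>, n \<ge> 1, the right-side corners
in counterclockwise order.  \<open>corner_vertex \<tau> n\<close> is the vertex \<open>\<V>(c_n)\<close>.\<close>
definition corner_vertex :: "nat list set \<Rightarrow> int \<Rightarrow> nat list" where
  "corner_vertex \<tau> n = (if 0 \<le> n then fst ((cwstep \<tau> ^^ nat n) ([], 0))
                         else fst ((ccwstep \<tau> ^^ nat (- n)) ([], nch \<tau> [])))"

definition succ_corner :: "nat list set \<Rightarrow> (nat list \<Rightarrow> int) \<Rightarrow> int \<Rightarrow> int" where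
  "succ_corner \<tau> lab n = n + 1 + int (LEAST k. lab (corner_vertex \<tau> (n + 1 + int k))
                                          = lab (corner_vertex \<tau> n) - 1)"

text \<open>\<open>\<Phi>(\<theta>,\<eta>)\<close> as (vertex set, set of arcs corner \<open>\<rightarrow>\<close> successor, root arc).\<close>
definition Phi :: "nat list set \<Rightarrow> (nat list \<Rightarrow> int) \<Rightarrow> nat
     \<Rightarrow> nat list set \<times> (nat list \<times> nat list) set \<times> (nat list \<times> nat list)" where
  "Phi \<tau> lab \<eta> =
     (\<tau>,
      {(corner_vertex \<tau> n, corner_vertex \<tau> (succ_corner \<tau> lab n)) | n. True},
      (if \<eta> = 1 then (corner_vertex \<tau> (succ_corner \<tau> lab 0), corner_vertex \<tau> 0)
       else (corner_vertex \<tau> 0, corner_vertex \<tau> (succ_corner \<tau> lab 0))))"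

definition q_vertices where "q_vertices q = fst q"
definition q_arcs where "q_arcs q = fst (snd q)"

text \<open>A proper geodesic ray of q emanating from the root: an infinite path in q
(each step traverses an edge, in either orientation) with labels \<open>-i\<close>.\<close>
definition proper_geodesic_ray ::
  "(nat list \<Rightarrow> int) \<Rightarrow> nat list set \<times> (nat list \<times> nat list) set \<times> (nat list \<times> nat list)
     \<Rightarrow> (nat \<Rightarrow> nat list) \<Rightarrow> bool" where
  "proper_geodesic_ray lab q \<gamma> \<longleftrightarrow> \<gamma> 0 = []
     \<and> (\<forall>i. \<gamma> i \<in> q_vertices q)
     \<and> (\<forall>i. (\<gamma> i, \<gamma> (Suc i)) \<in> q_arcs q \<or> (\<gamma> (Suc i), \<gamma> i) \<in> q_arcs q)
     \<and> (\<forall>i. lab (\<gamma> i) = - int i)"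

definition cmax :: "nat list set \<Rightarrow> (nat list \<Rightarrow> int) \<Rightarrow> nat \<Rightarrow> int" where
  "cmax \<tau> lab i = (succ_corner \<tau> lab ^^ i) 0"

primrec cmin :: "nat list set \<Rightarrow> (nat list \<Rightarrow> int) \<Rightarrow> nat \<Rightarrow> int" where
  "cmin \<tau> lab 0 = (GREATEST m. 0 \<le> m \<and> corner_vertex \<tau> m = [])"
| "cmin \<tau> lab (Suc n) = (GREATEST m. 0 \<le> m \<and>
        corner_vertex \<tau> m = corner_vertex \<tau> (succ_corner \<tau> lab (cmin \<tau> lab n)))"

definition gamma_max where "gamma_max \<tau> lab i = corner_vertex \<tau> (cmax \<tau> lab i)"
definition gamma_min where "gamma_min \<tau> lab i = corner_vertex \<tau> (cmin \<tau> lab i)"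

definition tree_path :: "nat list \<Rightarrow> nat list \<Rightarrow> nat list set" where
  "tree_path a b = {w. prefix (longest_common_prefix a b) w \<and> (prefix w a \<or> prefix w b)}"

end

theory Submission
  imports Defs "HOL-Library.List_Lexorder"
begin

text \<open>Two facts about the contour drive the proof: it enters the subtree of a vertex
  only through that vertex, and between a corner and its successor all labels are at
  least the label of the corner.  Hence a path following successor arcs from the root
  never passes strictly below a vertex of label \<open>\<le> -i\<close> before time \<open>i\<close>, which gives
  part 2.  Comparing, by induction on \<open>i\<close>, the arc used by \<open>\<gamma>\<close> with the arc leaving the
  last corner \<open>cmin i\<close> of \<open>gamma_min i\<close> shows that no left-side corner of \<open>\<gamma> i\<close> comes
  after \<open>cmin i\<close>.  For part 3 take the least \<open>j\<close> with \<open>cmin j\<close> after a given corner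
  of \<open>\<gamma> i\<close>: then \<open>gamma_min j\<close> is an ancestor of \<open>\<gamma> i\<close>, the path between them avoids
  the spine because the contour reaches the next spine vertex only after \<open>cmin j\<close>, and
  a second such ancestor would force the contour back to the first one after its last
  corner.\<close>

lemma plane_tree_child_iff:
  assumes "plane_tree \<tau>" "u \<in> \<tau>"
  shows "u @ [j] \<in> \<tau> \<longleftrightarrow> j < nch \<tau> u"
proof -
  let ?A = "{j. u @ [j] \<in> \<tau>}"
  have fin: "finite ?A" using assms unfolding plane_tree_def by blast
  have dc: "\<And>i j. j \<in> ?A \<Longrightarrow> i < j \<Longrightarrow> i \<in> ?A" using assms(1) unfolding plane_tree_def by blast
  have "?A = {..<card ?A}"
  proof (cases "?A = {}")
    case True then show ?thesis by simp
  next
    case False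
    define M where "M = Max ?A"
    have "M \<in> ?A" using fin False M_def Max_in by blast
    have "?A = {..M}"
    proof
      show "?A \<subseteq> {..M}" using fin M_def by auto
      show "{..M} \<subseteq> ?A"
      proof
        fix i assume "i \<in> {..M}"
        then have "i = M \<or> i < M" by auto
        then show "i \<in> ?A" using \<open>M \<in> ?A\<close> dc by blast
      qed
    qed
    then show ?thesis by (simp add: lessThan_Suc_atMost[symmetric])
  qed
  then show ?thesis unfolding nch_def by (metis (no_types, lifting) lessThan_iff mem_Collect_eq)
qed

locale SS_tree =
  fixes \<tau> :: "nat list set" and lab :: "nat list \<Rightarrow> int"
  assumes inSS: "in_SS \<tau> lab"
begin

abbreviation Sp where "Sp \<equiv> spine \<tau>"

lemma tree_plane: "plane_tree \<tau>" using inSS unfolding in_SS_def by blast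
lemma tree_labelling: "labelling \<tau> lab" using inSS unfolding in_SS_def by blast
lemma root_in_tree: "[] \<in> \<tau>" using tree_plane unfolding plane_tree_def by blast
lemma append_closed: "u @ v \<in> \<tau> \<Longrightarrow> u \<in> \<tau>" using tree_plane unfolding plane_tree_def by blast
lemma prefix_closed: "prefix u v \<Longrightarrow> v \<in> \<tau> \<Longrightarrow> u \<in> \<tau>"
  by (metis prefix_def append_closed)
lemma lab_root: "lab [] = 0" using tree_labelling unfolding labelling_def by blast
lemma lab_edge: "u @ [j] \<in> \<tau> \<Longrightarrow> \<bar>lab (u @ [j]) - lab u\<bar> \<le> 1"
  using tree_labelling unfolding labelling_def by blast
lemma child_iff: "u \<in> \<tau> \<Longrightarrow> u @ [j] \<in> \<tau> \<longleftrightarrow> j < nch \<tau> u"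
  using plane_tree_child_iff[OF tree_plane] by blast

lemma spine_ex1: "\<exists>!S. is_spine \<tau> S" using inSS unfolding in_SS_def by blast
lemma is_spine_Sp: "is_spine \<tau> Sp" unfolding spine_def using theI'[OF spine_ex1] .
lemma Sp_unique: "is_spine \<tau> S' \<Longrightarrow> S' = Sp" using spine_ex1 is_spine_Sp by blast
lemma spine_labels_unbounded: "\<forall>M::int. \<exists>i. lab (Sp i) < M" using inSS unfolding in_SS_def by blast

definition spine_child where "spine_child k = (SOME j. Sp (Suc k) = Sp k @ [j])"
lemma Sp_Suc: "Sp (Suc k) = Sp k @ [spine_child k]"
  unfolding spine_child_def using is_spine_Sp unfolding is_spine_def by (metis (mono_tags) someI_ex)
lemma Sp_0: "Sp 0 = []" using is_spine_Sp unfolding is_spine_def by blast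
lemma Sp_in: "Sp k \<in> \<tau>" using is_spine_Sp unfolding is_spine_def by blast
lemma length_Sp[simp]: "length (Sp k) = k" by (induction k) (simp_all add: Sp_0 Sp_Suc)
lemma take_Sp: "k \<le> K \<Longrightarrow> take k (Sp K) = Sp k"
proof (induction K)
  case 0 then show ?case by (simp add: Sp_0)
next
  case (Suc K)
  then show ?case
    by (cases "k = Suc K") (simp_all add: Sp_Suc)
qed
lemma prefix_Sp: "k \<le> K \<Longrightarrow> prefix (Sp k) (Sp K)"
  by (metis take_Sp take_is_prefix)
lemma prefix_Sp_eq: "prefix v (Sp K) \<Longrightarrow> v = Sp (length v)"
  by (metis length_Sp prefix_length_le take_Sp prefix_def append_eq_conv_conj)
lemma spine_child_lt: "spine_child k < nch \<tau> (Sp k)"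
  using child_iff[OF Sp_in] Sp_in[of "Suc k"] Sp_Suc by metis
lemma spine_child_le_in: "j \<le> spine_child k \<Longrightarrow> Sp k @ [j] \<in> \<tau>"
  using child_iff[OF Sp_in] spine_child_lt by (meson le_less_trans)

definition left_of_spine where "left_of_spine v \<longleftrightarrow> (\<forall>k < length v. take k v = Sp k \<longrightarrow> v ! k \<le> spine_child k)"
definition right_of_spine where "right_of_spine v \<longleftrightarrow> (\<forall>k < length v. take k v = Sp k \<longrightarrow> spine_child k \<le> v ! k)"

lemma left_right_of_spine_eq: "left_of_spine v \<Longrightarrow> right_of_spine v \<Longrightarrow> v = Sp (length v)"
proof -
  assume l: "left_of_spine v" and r: "right_of_spine v"
  have "\<forall>k \<le> length v. take k v = Sp k"
  proof (intro allI impI)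
    fix k assume "k \<le> length v"
    then show "take k v = Sp k"
    proof (induction k)
      case 0 then show ?case by (simp add: Sp_0)
    next
      case (Suc k)
      then have h: "take k v = Sp k" by simp
      have "v ! k = spine_child k" using l r h Suc.prems unfolding left_of_spine_def right_of_spine_def
        by (metis Suc_le_lessD antisym)
      then show ?case using h Suc.prems by (simp add: take_Suc_conv_app_nth Sp_Suc)
    qed
  qed
  then show ?thesis by (metis order_refl take_all)
qed

lemma left_of_spine_snoc:
  "left_of_spine v \<Longrightarrow> (v = Sp (length v) \<longrightarrow> j \<le> spine_child (length v)) \<Longrightarrow> left_of_spine (v @ [j])"
  unfolding left_of_spine_def by (auto simp: nth_append less_Suc_eq)
lemma right_of_spine_snoc:
  "right_of_spine v \<Longrightarrow> (v = Sp (length v) \<longrightarrow> spine_child (length v) \<le> j) \<Longrightarrow> right_of_spine (v @ [j])"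
  unfolding right_of_spine_def by (auto simp: nth_append less_Suc_eq)
lemma left_of_spine_append:
  assumes "left_of_spine (v @ w)" shows "left_of_spine v"
  unfolding left_of_spine_def
proof (intro allI impI)
  fix k assume "k < length v" "take k v = Sp k"
  then show "v ! k \<le> spine_child k"
    using assms unfolding left_of_spine_def by (auto simp: nth_append dest!: spec[of _ k])
qed
lemma right_of_spine_append:
  assumes "right_of_spine (v @ w)" shows "right_of_spine v"
  unfolding right_of_spine_def
proof (intro allI impI)
  fix k assume "k < length v" "take k v = Sp k"
  then show "spine_child k \<le> v ! k"
    using assms unfolding right_of_spine_def by (auto simp: nth_append dest!: spec[of _ k])
qed

section \<open>Contour walks\<close>

definition cw_inv where "cw_inv s \<longleftrightarrow> fst s \<in> \<tau> \<and> left_of_spine (fst s) \<and>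
   (fst s = Sp (length (fst s)) \<longrightarrow> snd s \<le> spine_child (length (fst s)))"
definition ccw_inv where "ccw_inv s \<longleftrightarrow> fst s \<in> \<tau> \<and> snd s \<le> nch \<tau> (fst s) \<and> right_of_spine (fst s) \<and>
   (fst s = Sp (length (fst s)) \<longrightarrow> spine_child (length (fst s)) < snd s)"

lemma cw_backtrack_nonroot:
  assumes "cw_inv (v, j)" "v @ [j] \<notin> \<tau>"
  shows "v \<noteq> [] \<and> (butlast v = Sp (length (butlast v)) \<longrightarrow> Suc (last v) \<le> spine_child (length (butlast v)))"
proof -
  have vin: "v \<in> \<tau>" and lv: "left_of_spine v" and jc: "v = Sp (length v) \<longrightarrow> j \<le> spine_child (length v)"
    using assms(1) unfolding cw_inv_def by auto
  have nsp: "v \<noteq> Sp (length v)"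
  proof
    assume "v = Sp (length v)"
    then have "v @ [j] \<in> \<tau>" using jc spine_child_le_in by metis
    then show False using assms(2) by simp
  qed
  then have ne: "v \<noteq> []" using Sp_0 by auto
  then obtain b c where v: "v = b @ [c]" by (metis rev_exhaust)
  have "b = Sp (length b) \<longrightarrow> Suc c \<le> spine_child (length b)"
  proof
    assume bs: "b = Sp (length b)"
    have "c \<le> spine_child (length b)" using lv bs unfolding left_of_spine_def v by (auto simp: nth_append)
    moreover have "c \<noteq> spine_child (length b)"
      using nsp bs v by (metis Sp_Suc length_append_singleton)
    ultimately show "Suc c \<le> spine_child (length b)" by simp
  qed
  then show ?thesis using ne v by simp
qed

lemma cw_inv_step: "cw_inv s \<Longrightarrow> cw_inv (cwstep \<tau> s)"
proof -
  assume I: "cw_inv s"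
  obtain v j where s: "s = (v, j)" by fastforce
  show ?thesis
  proof (cases "v @ [j] \<in> \<tau>")
    case True
    then show ?thesis using I unfolding s cwstep_def cw_inv_def
      by (auto intro!: left_of_spine_snoc)
  next
    case False
    have h: "v \<noteq> [] \<and> (butlast v = Sp (length (butlast v)) \<longrightarrow> Suc (last v) \<le> spine_child (length (butlast v)))"
      using cw_backtrack_nonroot I False s by blast
    have "butlast v \<in> \<tau>" using I s unfolding cw_inv_def
      by (metis append_butlast_last_id h append_closed fst_conv)
    moreover have "left_of_spine (butlast v)" using I s unfolding cw_inv_def
      by (metis append_butlast_last_id h left_of_spine_append fst_conv)
    ultimately show ?thesis using False h unfolding s cwstep_def cw_inv_def by auto
  qed
qed

lemma ccw_inv_step: "ccw_inv s \<Longrightarrow> ccw_inv (ccwstep \<tau> s)"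
proof -
  assume I: "ccw_inv s"
  obtain v m where s: "s = (v, m)" by fastforce
  have vin: "v \<in> \<tau>" and mle: "m \<le> nch \<tau> v" and rv: "right_of_spine v"
    and mc: "v = Sp (length v) \<longrightarrow> spine_child (length v) < m"
    using I unfolding s ccw_inv_def by auto
  show ?thesis
  proof (cases "0 < m")
    case True
    have cin: "v @ [m - 1] \<in> \<tau>" using child_iff[OF vin] mle True by simp
    have r2: "right_of_spine (v @ [m - 1])" using rv mc by (intro right_of_spine_snoc) auto
    have c2: "v @ [m - 1] = Sp (length (v @ [m - 1])) \<longrightarrow>
         spine_child (length (v @ [m - 1])) < nch \<tau> (v @ [m - 1])"
      using spine_child_lt by metis
    show ?thesis using True cin r2 c2 unfolding s ccwstep_def ccw_inv_def by auto
  next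
    case False
    then have m0: "m = 0" by simp
    have ne: "v \<noteq> []" using mc m0 Sp_0 by auto
    then obtain b c where v: "v = b @ [c]" by (metis rev_exhaust)
    have bin: "b \<in> \<tau>" using vin v append_closed by blast
    have clt: "c < nch \<tau> b" using child_iff[OF bin] vin v by simp
    have rb: "right_of_spine b" using rv v right_of_spine_append by blast
    have bc: "b = Sp (length b) \<longrightarrow> spine_child (length b) < c"
    proof
      assume bs: "b = Sp (length b)"
      have "spine_child (length b) \<le> c" using rv bs unfolding right_of_spine_def v by (auto simp: nth_append)
      moreover have "c \<noteq> spine_child (length b)"
      proof
        assume "c = spine_child (length b)"
        then have "v = Sp (length v)" using bs v by (metis Sp_Suc length_append_singleton)
        then show False using mc m0 by simp
      qed
      ultimately show "spine_child (length b) < c" by simp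
    qed
    show ?thesis using m0 bin clt rb bc unfolding s v ccwstep_def ccw_inv_def by auto
  qed
qed

definition cw_state where "cw_state t = (cwstep \<tau> ^^ t) ([], 0)"
definition ccw_state where "ccw_state t = (ccwstep \<tau> ^^ t) ([], nch \<tau> [])"

lemma cw_state_Suc: "cw_state (Suc t) = cwstep \<tau> (cw_state t)" unfolding cw_state_def by simp
lemma ccw_state_Suc: "ccw_state (Suc t) = ccwstep \<tau> (ccw_state t)" unfolding ccw_state_def by simp

lemma cw_inv_cw_state: "cw_inv (cw_state t)"
proof (induction t)
  case 0 show ?case unfolding cw_state_def cw_inv_def left_of_spine_def using root_in_tree by simp
next
  case (Suc t) then show ?case using cw_inv_step cw_state_Suc by simp
qed

lemma ccw_inv_ccw_state: "ccw_inv (ccw_state t)"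
proof (induction t)
  case 0 show ?case unfolding ccw_state_def ccw_inv_def right_of_spine_def using root_in_tree spine_child_lt[of 0] Sp_0 by simp
next
  case (Suc t) then show ?case using ccw_inv_step ccw_state_Suc by simp
qed

abbreviation V where "V \<equiv> corner_vertex \<tau>"

lemma V_of_nat: "V (int t) = fst (cw_state t)" unfolding corner_vertex_def cw_state_def by simp
lemma V_uminus_of_nat: "V (- int t) = fst (ccw_state t)"
proof (cases t)
  case 0 then show ?thesis unfolding corner_vertex_def ccw_state_def by simp
next
  case (Suc n)
  have "nat (- (- int t)) = t" by simp
  then show ?thesis unfolding corner_vertex_def ccw_state_def using Suc by (simp del: of_nat_Suc)
qed
lemma V_0: "V 0 = []" using V_of_nat[of 0] unfolding cw_state_def by simp

definition tree_adj where "tree_adj a b \<longleftrightarrow> a = b \<or> (\<exists>j. b = a @ [j]) \<or> (\<exists>j. a = b @ [j])"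

lemma tree_adj_butlast: "tree_adj v (butlast v)"
  unfolding tree_adj_def by (cases "v = []") (simp, metis append_butlast_last_id)
lemma cw_tree_adj: "tree_adj (fst s) (fst (cwstep \<tau> s))"
proof -
  obtain v j where s: "s = (v, j)" by fastforce
  show ?thesis unfolding s cwstep_def using tree_adj_butlast[of v] by (auto simp add: tree_adj_def)
qed
lemma ccw_tree_adj: "tree_adj (fst s) (fst (ccwstep \<tau> s))"
proof -
  obtain v j where s: "s = (v, j)" by fastforce
  show ?thesis unfolding s ccwstep_def using tree_adj_butlast[of v] by (auto simp add: tree_adj_def)
qed
lemma tree_adj_sym: "tree_adj a b \<Longrightarrow> tree_adj b a" unfolding tree_adj_def by auto

lemma V_tree_adj: "tree_adj (V x) (V (x + 1))"
proof (cases "0 \<le> x")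
  case True
  define t where "t = nat x"
  have x: "x = int t" using True unfolding t_def by simp
  then have "x + 1 = int (Suc t)" by simp
  then show ?thesis using x V_of_nat cw_state_Suc cw_tree_adj by metis
next
  case False
  define t where "t = nat (- x) - 1"
  have x: "x = - int (Suc t)" using False unfolding t_def by simp
  then have x1: "x + 1 = - int t" by simp
  have "tree_adj (fst (ccw_state t)) (fst (ccw_state (Suc t)))" using ccw_tree_adj ccw_state_Suc by metis
  then show ?thesis using x x1 V_uminus_of_nat tree_adj_sym by metis
qed

lemma V_in: "V x \<in> \<tau>"
proof (cases "0 \<le> x")
  case True
  define t where "t = nat x"
  have x: "x = int t" using True unfolding t_def by simp
  then show ?thesis using V_of_nat cw_inv_cw_state unfolding cw_inv_def by metis
next
  case False
  define t where "t = nat (- x)"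
  have x: "x = - int t" using False unfolding t_def by simp
  then show ?thesis using V_uminus_of_nat ccw_inv_ccw_state unfolding ccw_inv_def by metis
qed

abbreviation L where "L x \<equiv> lab (V x)"

lemma L_Suc_diff: "\<bar>L (x + 1) - L x\<bar> \<le> 1"
proof -
  have a: "tree_adj (V x) (V (x + 1))" by (rule V_tree_adj)
  show ?thesis
  proof (cases "V x = V (x + 1)")
    case True then show ?thesis by simp
  next
    case False
    then consider j where "V (x + 1) = V x @ [j]" | j where "V x = V (x + 1) @ [j]"
      using a unfolding tree_adj_def by blast
    then show ?thesis
    proof cases
      case 1 then show ?thesis using lab_edge V_in by metis
    next
      case 2 then have "\<bar>L x - L (x + 1)\<bar> \<le> 1" using lab_edge V_in by metis
      then show ?thesis by linarith
    qed
  qed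
qed

lemma L_intermediate_value:
  assumes "a \<le> b" "L b \<le> c" "c \<le> L a"
  shows "\<exists>y. a \<le> y \<and> y \<le> b \<and> L y = c"
  using assms
proof (induction "nat (b - a)" arbitrary: a)
  case 0
  then have "a = b" by simp
  then show ?case using 0 by auto
next
  case (Suc d)
  show ?case
  proof (cases "L a = c")
    case True then show ?thesis using Suc.prems by auto
  next
    case False
    then have lt: "c < L a" using Suc.prems by simp
    have ab: "a < b" using Suc.hyps(2) by simp
    have "L (a + 1) \<ge> c" using L_Suc_diff[of a] lt by linarith
    then obtain y where "a + 1 \<le> y" "y \<le> b" "L y = c"
      using Suc.hyps(1)[of "a + 1"] Suc.hyps(2) Suc.prems ab by force
    then show ?thesis by (intro exI[of _ y]) auto
  qed
qed

lemma lab_Sp_ge: "lab (Sp k) \<ge> - int k"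
proof (induction k)
  case 0 then show ?case by (simp add: Sp_0 lab_root)
next
  case (Suc k)
  have "\<bar>lab (Sp (Suc k)) - lab (Sp k)\<bar> \<le> 1" using lab_edge Sp_in Sp_Suc by metis
  then show ?case using Suc by linarith
qed

section \<open>The clockwise contour runs down the spine\<close>

definition subtree where "subtree w = {v \<in> \<tau>. prefix w v}"

lemma subtree_split: "subtree w \<subseteq> insert w (\<Union>j \<in> {j. w @ [j] \<in> \<tau>}. subtree (w @ [j]))"
proof
  fix v assume v: "v \<in> subtree w"
  show "v \<in> insert w (\<Union>j \<in> {j. w @ [j] \<in> \<tau>}. subtree (w @ [j]))"
  proof (cases "v = w")
    case True then show ?thesis by simp
  next
    case False
    then obtain c r where vv: "v = w @ c # r" using v unfolding subtree_def
      by (metis append_Nil2 prefix_def neq_Nil_conv mem_Collect_eq)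
    have "w @ [c] \<in> \<tau>" using v vv unfolding subtree_def
      by (metis (no_types, lifting) append_Cons append_assoc append_self_conv2 mem_Collect_eq append_closed)
    moreover have "v \<in> subtree (w @ [c])" using v vv unfolding subtree_def by (simp add: prefix_def)
    ultimately show ?thesis by blast
  qed
qed

lemma infinite_subtree_child:
  assumes "w \<in> \<tau>" "infinite (subtree w)"
  shows "\<exists>j. w @ [j] \<in> \<tau> \<and> infinite (subtree (w @ [j]))"
proof (rule ccontr)
  assume "\<not> ?thesis"
  then have "\<forall>j \<in> {j. w @ [j] \<in> \<tau>}. finite (subtree (w @ [j]))" by blast
  moreover have "finite {j. w @ [j] \<in> \<tau>}" using tree_plane assms(1) unfolding plane_tree_def by blast
  ultimately have "finite (insert w (\<Union>j \<in> {j. w @ [j] \<in> \<tau>}. subtree (w @ [j])))" by blast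
  then show False using subtree_split assms(2) finite_subset by blast
qed

text \<open>Koenig's lemma, together with the uniqueness of the spine.\<close>

lemma infinite_subtree_on_spine:
  assumes "w \<in> \<tau>" "infinite (subtree w)"
  shows "w = Sp (length w)"
proof -
  define nxt where "nxt u = u @ [SOME j. u @ [j] \<in> \<tau> \<and> infinite (subtree (u @ [j]))]" for u
  define f where "f n = (nxt ^^ n) w" for n
  have fS: "f (Suc n) = nxt (f n)" for n unfolding f_def by simp
  have inv: "f n \<in> \<tau> \<and> infinite (subtree (f n))" for n
  proof (induction n)
    case 0 then show ?case using assms unfolding f_def by simp
  next
    case (Suc n)
    then have "\<exists>j. f n @ [j] \<in> \<tau> \<and> infinite (subtree (f n @ [j]))" using infinite_subtree_child by blast
    then show ?case unfolding fS nxt_def by (rule someI_ex)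
  qed
  define S' where "S' i = (if i \<le> length w then take i w else f (i - length w))" for i
  have "is_spine \<tau> S'"
    unfolding is_spine_def
  proof (intro conjI allI)
    show "S' 0 = []" unfolding S'_def by simp
    fix i
    show "S' i \<in> \<tau>" unfolding S'_def using inv assms(1)
      by (auto intro: prefix_closed take_is_prefix)
    show "\<exists>j. S' (Suc i) = S' i @ [j]"
    proof (cases "Suc i \<le> length w")
      case True
      then show ?thesis unfolding S'_def by (simp add: take_Suc_conv_app_nth)
    next
      case False
      then have "Suc i - length w = Suc (i - length w)" by simp
      moreover have "S' i = f (i - length w)"
        using False unfolding S'_def f_def by (cases "i = length w") auto
      ultimately have e: "S' (Suc i) = nxt (S' i)" using False unfolding S'_def by (simp only: if_False fS)
      show ?thesis unfolding e nxt_def by blast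
    qed
  qed
  then have "S' = Sp" by (rule Sp_unique)
  moreover have "S' (length w) = w" unfolding S'_def by simp
  ultimately show ?thesis by simp
qed

lemma finite_subtree_off_spine: "w \<in> \<tau> \<Longrightarrow> w \<noteq> Sp (length w) \<Longrightarrow> finite (subtree w)"
  using infinite_subtree_on_spine by blast

definition cw_reaches where "cw_reaches s t \<longleftrightarrow> (\<exists>k. (cwstep \<tau> ^^ k) s = t)"

lemma cw_reaches_refl: "cw_reaches s s" unfolding cw_reaches_def by (intro exI[of _ 0]) simp
lemma cw_reaches_step: "cw_reaches (cwstep \<tau> s) t \<Longrightarrow> cw_reaches s t"
proof -
  assume "cw_reaches (cwstep \<tau> s) t"
  then obtain k where "(cwstep \<tau> ^^ k) (cwstep \<tau> s) = t" unfolding cw_reaches_def by blast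
  then have "(cwstep \<tau> ^^ Suc k) s = t" by (simp add: funpow_Suc_right del: funpow.simps)
  then show ?thesis unfolding cw_reaches_def by blast
qed
lemma cw_reaches_trans: "cw_reaches s t \<Longrightarrow> cw_reaches t u \<Longrightarrow> cw_reaches s u"
proof -
  assume "cw_reaches s t" "cw_reaches t u"
  then obtain k1 k2 where "(cwstep \<tau> ^^ k1) s = t" "(cwstep \<tau> ^^ k2) t = u" unfolding cw_reaches_def by blast
  then have "(cwstep \<tau> ^^ (k2 + k1)) s = u" by (simp add: funpow_add)
  then show ?thesis unfolding cw_reaches_def by blast
qed

lemma cw_reaches_parent:
  assumes "finite (subtree w)" "w \<in> \<tau>" "w \<noteq> []"
  shows "cw_reaches (w, j) (butlast w, Suc (last w))"
  using assms
proof (induction "card (subtree w)" arbitrary: w j rule: less_induct)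
  case less
  show ?case
  proof (induction "nch \<tau> w - j" arbitrary: j)
    case 0
    then have "w @ [j] \<notin> \<tau>" using child_iff[OF less.prems(2)] by simp
    then have "cwstep \<tau> (w, j) = (butlast w, Suc (last w))" unfolding cwstep_def by simp
    then show ?case using cw_reaches_step[of "(w, j)"] cw_reaches_refl by simp
  next
    case (Suc d)
    then have cin: "w @ [j] \<in> \<tau>" using child_iff[OF less.prems(2)] by simp
    have sub: "subtree (w @ [j]) \<subset> subtree w"
      unfolding subtree_def using less.prems(2) by (auto simp: prefix_def)
    then have "card (subtree (w @ [j])) < card (subtree w)" using less.prems(1) psubset_card_mono by blast
    moreover have "finite (subtree (w @ [j]))" using sub less.prems(1) finite_subset by blast
    ultimately have r1: "cw_reaches (w @ [j], 0) (w, Suc j)" using less.hyps cin by fastforce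
    have r2: "cw_reaches (w, Suc j) (butlast w, Suc (last w))" using Suc by simp
    have "cwstep \<tau> (w, j) = (w @ [j], 0)" using cin unfolding cwstep_def by simp
    then show ?case using r1 r2 cw_reaches_trans cw_reaches_step by metis
  qed
qed

lemma cw_reaches_spine_Suc: "cw_reaches (Sp k, 0) (Sp (Suc k), 0)"
proof -
  have "j \<le> spine_child k \<Longrightarrow> cw_reaches (Sp k, 0) (Sp k, j)" for j
  proof (induction j)
    case 0 show ?case by (rule cw_reaches_refl)
  next
    case (Suc j)
    have cin: "Sp k @ [j] \<in> \<tau>" using spine_child_le_in Suc.prems by simp
    have ns: "Sp k @ [j] \<noteq> Sp (length (Sp k @ [j]))" using Sp_Suc Suc.prems by simp
    have "cw_reaches (Sp k @ [j], 0) (Sp k, Suc j)"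
      using cw_reaches_parent[OF finite_subtree_off_spine[OF cin ns] cin] by simp
    moreover have "cwstep \<tau> (Sp k, j) = (Sp k @ [j], 0)" using cin unfolding cwstep_def by simp
    ultimately show ?case using Suc cw_reaches_trans cw_reaches_step by (metis Suc_leD)
  qed
  then have "cw_reaches (Sp k, 0) (Sp k, spine_child k)" by simp
  moreover have "cwstep \<tau> (Sp k, spine_child k) = (Sp (Suc k), 0)"
    using spine_child_le_in[of "spine_child k" k] unfolding cwstep_def by (simp add: Sp_Suc)
  ultimately show ?thesis using cw_reaches_trans cw_reaches_step cw_reaches_refl by metis
qed

lemma cw_state_spine_ex: "\<exists>t. cw_state t = (Sp k, 0)"
proof -
  have "cw_reaches ([], 0) (Sp k, 0)"
  proof (induction k)
    case 0 then show ?case by (simp add: Sp_0 cw_reaches_refl)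
  next
    case (Suc k) then show ?case using cw_reaches_spine_Suc cw_reaches_trans by blast
  qed
  then show ?thesis unfolding cw_reaches_def cw_state_def by blast
qed

definition spine_time where "spine_time k = (SOME t. cw_state t = (Sp k, 0))"
lemma cw_state_spine_time: "cw_state (spine_time k) = (Sp k, 0)" unfolding spine_time_def using cw_state_spine_ex by (rule someI_ex)

lemma prefix_spine_cw_state_Suc: "prefix (Sp K) (fst (cw_state t)) \<Longrightarrow> prefix (Sp K) (fst (cw_state (Suc t)))"
proof -
  assume p: "prefix (Sp K) (fst (cw_state t))"
  obtain v j where s: "cw_state t = (v, j)" by fastforce
  have I: "cw_inv (v, j)" using cw_inv_cw_state s by metis
  show ?thesis
  proof (cases "v @ [j] \<in> \<tau>")
    case True
    then show ?thesis using p s unfolding cw_state_Suc cwstep_def by (auto simp: prefix_def)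
  next
    case False
    have "v \<noteq> Sp K"
    proof
      assume "v = Sp K"
      then have "j \<le> spine_child K" using I unfolding cw_inv_def by simp
      then show False using False spine_child_le_in \<open>v = Sp K\<close> by blast
    qed
    then have "prefix (Sp K) (butlast v)" using p s
      by (metis fst_conv prefix_snoc append_butlast_last_id prefix_bot.extremum_uniqueI prefix_Nil)
    then show ?thesis using False s unfolding cw_state_Suc cwstep_def by simp
  qed
qed

lemma prefix_spine_cw_state: "spine_time K \<le> t \<Longrightarrow> prefix (Sp K) (fst (cw_state t))"
proof (induction t)
  case 0 then show ?case using cw_state_spine_time[of K] by simp
next
  case (Suc t)
  show ?case
  proof (cases "spine_time K = Suc t")
    case True then show ?thesis using cw_state_spine_time[of K] by simp
  next
    case False then show ?thesis using Suc prefix_spine_cw_state_Suc by simp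
  qed
qed

lemma corner_index_lt_spine_time: "0 \<le> m \<Longrightarrow> V m = v \<Longrightarrow> m < int (spine_time (Suc (length v)))"
proof (rule ccontr)
  assume a: "0 \<le> m" "V m = v" "\<not> m < int (spine_time (Suc (length v)))"
  define t where "t = nat m"
  have m: "m = int t" using a unfolding t_def by simp
  have "spine_time (Suc (length v)) \<le> t" using a m by simp
  then have "prefix (Sp (Suc (length v))) v" using prefix_spine_cw_state a(2) m V_of_nat by metis
  then show False using prefix_length_le by fastforce
qed

lemma corner_labels_unbounded: "\<exists>t. int t > T \<and> L (int t) < c"
proof -
  define B where "B = nat (T + 1)"
  define M where "M = min c (- int (length (V (int B))))"
  obtain i where i: "lab (Sp i) < M" using spine_labels_unbounded by blast
  have "i > length (V (int B))" using i lab_Sp_ge[of i] unfolding M_def by linarith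
  have "spine_time i > B"
  proof (rule ccontr)
    assume "\<not> B < spine_time i"
    then have "prefix (Sp i) (V (int B))" using prefix_spine_cw_state V_of_nat by simp
    then show False using \<open>i > length (V (int B))\<close> prefix_length_le by fastforce
  qed
  moreover have "L (int (spine_time i)) = lab (Sp i)" using V_of_nat cw_state_spine_time by simp
  ultimately show ?thesis using i unfolding M_def B_def
    by (intro exI[of _ "spine_time i"]) auto
qed

abbreviation succ where "succ n \<equiv> succ_corner \<tau> lab n"

lemma succ_ex: "\<exists>k. L (n + 1 + int k) = L n - 1"
proof -
  obtain t where t: "int t > n" "L (int t) < L n" using corner_labels_unbounded by blast
  then obtain y where y: "n \<le> y" "y \<le> int t" "L y = L n - 1"
    using L_intermediate_value[of n "int t" "L n - 1"] by force
  then have "y \<noteq> n" by auto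
  then have "y = n + 1 + int (nat (y - n - 1))" using y by simp
  then show ?thesis using y by metis
qed

lemma succ_props: "n < succ n \<and> L (succ n) = L n - 1 \<and> (\<forall>x. n < x \<and> x < succ n \<longrightarrow> L x \<noteq> L n - 1)"
proof -
  let ?P = "\<lambda>k. L (n + 1 + int k) = L n - 1"
  define K where "K = (LEAST k. ?P k)"
  have sK: "succ n = n + 1 + int K" unfolding succ_corner_def K_def ..
  have P: "?P K" unfolding K_def using succ_ex by (rule LeastI_ex)
  have m: "\<And>k. ?P k \<Longrightarrow> K \<le> k" unfolding K_def by (rule Least_le)
  have "\<forall>x. n < x \<and> x < succ n \<longrightarrow> L x \<noteq> L n - 1"
  proof (intro allI impI)
    fix x assume x: "n < x \<and> x < succ n"
    show "L x \<noteq> L n - 1"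
    proof
      assume "L x = L n - 1"
      moreover have "x = n + 1 + int (nat (x - n - 1))" using x by simp
      ultimately have "?P (nat (x - n - 1))" by metis
      then have "K \<le> nat (x - n - 1)" by (rule m)
      then have "int K \<le> x - n - 1" using x by linarith
      then show False using x sK by linarith
    qed
  qed
  moreover have "n < succ n" using sK by linarith
  moreover have "L (succ n) = L n - 1" using sK P by simp
  ultimately show ?thesis by blast
qed

lemma succ_gt: "n < succ n" using succ_props by blast
lemma L_succ: "L (succ n) = L n - 1" using succ_props by blast
lemma L_between_succ: "n < x \<Longrightarrow> x < succ n \<Longrightarrow> L n \<le> L x"
proof (rule ccontr)
  assume a: "n < x" "x < succ n" "\<not> L n \<le> L x"
  then obtain y where "n \<le> y" "y \<le> x" "L y = L n - 1" using L_intermediate_value[of n x "L n - 1"] by force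
  moreover then have "y \<noteq> n" by auto
  ultimately show False using succ_props a by force
qed
lemma succ_least: "n < x \<Longrightarrow> L x = L n - 1 \<Longrightarrow> succ n \<le> x"
  using succ_props by force
lemma succ_mono: "a \<le> b \<Longrightarrow> L a = L b \<Longrightarrow> succ a \<le> succ b"
proof (cases "a = b")
  case False
  assume "a \<le> b" "L a = L b"
  then show ?thesis using succ_least[of a "succ b"] succ_gt[of b] L_succ[of b] False by simp
qed simp

section \<open>Clockwise contour order\<close>

lemma less_append_Cons: "(xs::nat list) < xs @ (a # r)"
  by (induction xs) auto
lemma less_append_Cons_Cons: "(j::nat) < c \<Longrightarrow> b @ (j # r) < b @ (c # r')"
  by (induction b) auto

text \<open>The clockwise contour visits its states in increasing lexicographic order of
  these keys.\<close>

definition contour_key where "contour_key s = fst s @ [snd s]"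

lemma contour_key_step: "cw_inv s \<Longrightarrow> contour_key s < contour_key (cwstep \<tau> s)"
proof -
  assume I: "cw_inv s"
  obtain v j where s: "s = (v, j)" by fastforce
  show ?thesis
  proof (cases "v @ [j] \<in> \<tau>")
    case True
    then have "cwstep \<tau> s = (v @ [j], 0)" unfolding s cwstep_def by simp
    then show ?thesis unfolding s contour_key_def using less_append_Cons[of "v @ [j]" 0 "[]"] by simp
  next
    case False
    then have ne: "v \<noteq> []" using cw_backtrack_nonroot I s by blast
    then obtain b c where v: "v = b @ [c]" by (metis rev_exhaust)
    have "cwstep \<tau> s = (b, Suc c)" unfolding s cwstep_def using False v by simp
    then show ?thesis unfolding s contour_key_def v using less_append_Cons_Cons[of c "Suc c" b "[j]" "[]"] by simp
  qed
qed

lemma contour_key_strict_mono: "t < t' \<Longrightarrow> contour_key (cw_state t) < contour_key (cw_state t')"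
proof -
  assume "t < t'"
  moreover have "\<And>n. contour_key (cw_state n) < contour_key (cw_state (Suc n))"
    using contour_key_step cw_inv_cw_state cw_state_Suc by simp
  ultimately show ?thesis using lift_Suc_mono_less[of "\<lambda>n. contour_key (cw_state n)"] by blast
qed

lemma contour_key_less_imp_less: "contour_key (cw_state t) < contour_key (cw_state t') \<Longrightarrow> t < t'"
  using contour_key_strict_mono by (metis less_asym nat_neq_iff)

lemma prefix_between_snoc: "(a::nat list) @ [i] < k \<Longrightarrow> k < a @ [j] \<Longrightarrow> prefix a k"
proof (induction a arbitrary: k)
  case Nil then show ?case by simp
next
  case (Cons x a)
  then obtain y k' where k: "k = y # k'" by (cases k) auto
  then show ?case using Cons by auto
qed

lemma prefix_V_between:
  assumes "0 \<le> x" "x < z" "z < y" "V x = w" "V y = w"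
  shows "prefix w (V z)"
proof -
  define tx tz ty where "tx = nat x" and "tz = nat z" and "ty = nat y"
  have e: "x = int tx" "z = int tz" "y = int ty" using assms unfolding tx_def tz_def ty_def by auto
  have o: "tx < tz" "tz < ty" using assms e by auto
  have k1: "contour_key (cw_state tx) < contour_key (cw_state tz)" and k2: "contour_key (cw_state tz) < contour_key (cw_state ty)" using contour_key_strict_mono o by auto
  have vx: "fst (cw_state tx) = w" and vy: "fst (cw_state ty) = w" using assms V_of_nat e by metis+
  obtain jx jy where "contour_key (cw_state tx) = w @ [jx]" "contour_key (cw_state ty) = w @ [jy]"
    unfolding contour_key_def using vx vy by blast
  then have a: "w @ [jx] < contour_key (cw_state tz)" "contour_key (cw_state tz) < w @ [jy]" using k1 k2 by auto
  then have p: "prefix w (contour_key (cw_state tz))" using prefix_between_snoc by blast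
  have kz: "contour_key (cw_state tz) = V z @ [snd (cw_state tz)]" unfolding contour_key_def using V_of_nat e by simp
  show ?thesis
  proof (cases "w = contour_key (cw_state tz)")
    case True
    then show ?thesis using a(1) less_append_Cons[of w jx "[]"] by simp
  next
    case False
    then show ?thesis using p kz by (metis prefix_snoc)
  qed
qed

lemma corner_before_spine_child:
  assumes "0 \<le> f" "V f = Sp k" "0 \<le> z" "prefix (Sp (Suc k)) (V z)"
  shows "f < z"
proof -
  define tf tz where "tf = nat f" and "tz = nat z"
  have e: "f = int tf" "z = int tz" using assms unfolding tf_def tz_def by auto
  have vf: "fst (cw_state tf) = Sp k" using assms V_of_nat e by metis
  have jf: "snd (cw_state tf) \<le> spine_child k" using cw_inv_cw_state[of tf] vf unfolding cw_inv_def by simp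
  obtain r where r: "V z = Sp k @ spine_child k # r" using assms(4) unfolding Sp_Suc prefix_def by auto
  have kf: "contour_key (cw_state tf) = Sp k @ [snd (cw_state tf)]" unfolding contour_key_def using vf by simp
  have kz: "contour_key (cw_state tz) = Sp k @ spine_child k # (r @ [snd (cw_state tz)])"
    unfolding contour_key_def using r V_of_nat e by simp
  have "contour_key (cw_state tf) < contour_key (cw_state tz)"
  proof (cases "snd (cw_state tf) = spine_child k")
    case True
    then show ?thesis unfolding kf kz using less_append_Cons[of "Sp k @ [spine_child k]"]
      by (metis append_Cons append_Nil append_assoc neq_Nil_conv snoc_eq_iff_butlast)
  next
    case False
    then show ?thesis unfolding kf kz using jf less_append_Cons_Cons by simp
  qed
  then show ?thesis using contour_key_less_imp_less e by simp
qed

lemma tree_adj_enter: "tree_adj a b \<Longrightarrow> \<not> prefix w a \<Longrightarrow> prefix w b \<Longrightarrow> b = w"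
  unfolding tree_adj_def by (auto simp: prefix_snoc)

lemma tree_adj_exit: "tree_adj a b \<Longrightarrow> prefix w a \<Longrightarrow> \<not> prefix w b \<Longrightarrow> a = w \<and> b = butlast w"
  unfolding tree_adj_def by (auto simp: prefix_snoc)

lemma contour_enters:
  "x < z \<Longrightarrow> \<not> prefix w (V x) \<Longrightarrow> prefix w (V z) \<Longrightarrow> \<exists>y. x < y \<and> y \<le> z \<and> V y = w"
proof (induction "nat (z - x)" arbitrary: x)
  case 0 then show ?case by simp
next
  case (Suc d)
  show ?case
  proof (cases "prefix w (V (x + 1))")
    case True
    then have "V (x + 1) = w" using tree_adj_enter V_tree_adj Suc.prems by blast
    then show ?thesis using Suc.prems by (intro exI[of _ "x + 1"]) auto
  next
    case False
    then have "x + 1 \<noteq> z" using Suc.prems by auto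
    then have "x + 1 < z" using Suc.prems by simp
    then obtain y where "x + 1 < y" "y \<le> z" "V y = w"
      using Suc.hyps(1)[of "x + 1"] Suc.hyps(2) Suc.prems False by force
    then show ?thesis by (intro exI[of _ y]) auto
  qed
qed

lemma contour_exits:
  "x < z \<Longrightarrow> prefix w (V x) \<Longrightarrow> \<not> prefix w (V z) \<Longrightarrow>
     \<exists>y. x \<le> y \<and> y < z \<and> V y = w \<and> V (y + 1) = butlast w"
proof (induction "nat (z - x)" arbitrary: x)
  case 0 then show ?case by simp
next
  case (Suc d)
  show ?case
  proof (cases "prefix w (V (x + 1))")
    case False
    then have "V x = w \<and> V (x + 1) = butlast w" using tree_adj_exit V_tree_adj Suc.prems by blast
    then show ?thesis using Suc.prems by (intro exI[of _ x]) auto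
  next
    case True
    then have "x + 1 \<noteq> z" using Suc.prems by auto
    then have "x + 1 < z" using Suc.prems by simp
    then obtain y where "x + 1 \<le> y" "y < z" "V y = w" "V (y + 1) = butlast w"
      using Suc.hyps(1)[of "x + 1"] Suc.hyps(2) Suc.prems True by force
    then show ?thesis by (intro exI[of _ y]) auto
  qed
qed

lemma ccw_exits:
  "a < b \<Longrightarrow> prefix w (fst (ccw_state a)) \<Longrightarrow> \<not> prefix w (fst (ccw_state b)) \<Longrightarrow> \<exists>t. ccw_state t = (w, 0)"
proof (induction b)
  case 0 then show ?case by simp
next
  case (Suc b)
  show ?case
  proof (cases "prefix w (fst (ccw_state b))")
    case True
    obtain v m where s: "ccw_state b = (v, m)" by fastforce
    show ?thesis
    proof (cases "0 < m")
      case True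
      then have "fst (ccw_state (Suc b)) = v @ [m - 1]" unfolding ccw_state_Suc s ccwstep_def by simp
      moreover have "prefix w (v @ [m - 1])" using \<open>prefix w (fst (ccw_state b))\<close> s by (auto simp: prefix_def)
      ultimately show ?thesis using Suc.prems by simp
    next
      case False
      then have f: "fst (ccw_state (Suc b)) = butlast v" unfolding ccw_state_Suc s ccwstep_def by simp
      have "v = w"
      proof (rule ccontr)
        assume "v \<noteq> w"
        then have "prefix w (butlast v)" using \<open>prefix w (fst (ccw_state b))\<close> s
          by (metis fst_conv prefix_snoc append_butlast_last_id prefix_Nil prefix_bot.extremum_uniqueI)
        then show False using Suc.prems f by simp
      qed
      then show ?thesis using s False by auto
    qed
  next
    case False
    then have "a \<noteq> b" using Suc.prems by auto
    then show ?thesis using Suc False by simp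
  qed
qed

lemma ccw_exit_right_off_spine: "ccw_state t = (w, 0) \<Longrightarrow> w \<noteq> Sp (length w) \<and> right_of_spine w"
  using ccw_inv_ccw_state[of t] unfolding ccw_inv_def by auto

section \<open>The minimal and maximal geodesics\<close>

abbreviation cm where "cm j \<equiv> cmin \<tau> lab j"
abbreviation gm where "gm j \<equiv> gamma_min \<tau> lab j"

lemma last_corner:
  assumes "0 \<le> x0" "V x0 = v"
  shows "0 \<le> (GREATEST m. 0 \<le> m \<and> V m = v) \<and> V (GREATEST m. 0 \<le> m \<and> V m = v) = v"
    and "0 \<le> m \<Longrightarrow> V m = v \<Longrightarrow> m \<le> (GREATEST m. 0 \<le> m \<and> V m = v)"
proof -
  let ?A = "{m. 0 \<le> m \<and> V m = v}"
  have "?A \<subseteq> {0..int (spine_time (Suc (length v)))}"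
    using corner_index_lt_spine_time by fastforce
  then have fin: "finite ?A" by (rule finite_subset) simp
  have G: "(GREATEST m. 0 \<le> m \<and> V m = v) = Max ?A"
    using Greatest_Max[OF fin] assms by blast
  show "0 \<le> (GREATEST m. 0 \<le> m \<and> V m = v) \<and> V (GREATEST m. 0 \<le> m \<and> V m = v) = v"
    using Max_in[OF fin] assms unfolding G by auto
  show "0 \<le> m \<Longrightarrow> V m = v \<Longrightarrow> m \<le> (GREATEST m. 0 \<le> m \<and> V m = v)"
    using Max_ge[OF fin] unfolding G by simp
qed

lemma cm_props: "0 \<le> cm j \<and> (\<forall>m. 0 \<le> m \<and> V m = V (cm j) \<longrightarrow> m \<le> cm j) \<and> L (cm j) = - int j"
proof (induction j)
  case 0
  then show ?case using last_corner[of 0 "[]"] V_0 lab_root by simp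
next
  case (Suc j)
  have "0 \<le> succ (cm j)" using Suc succ_gt[of "cm j"] by linarith
  then show ?case using last_corner[OF _ refl] L_succ[of "cm j"] Suc by simp
qed

lemma cm_nonneg: "0 \<le> cm j" using cm_props by blast
lemma cm_greatest: "0 \<le> m \<Longrightarrow> V m = gm j \<Longrightarrow> m \<le> cm j"
  using cm_props unfolding gamma_min_def by blast
lemma L_cm: "L (cm j) = - int j" using cm_props by blast
lemma gm_0: "gm 0 = []"
  using last_corner[of 0 "[]"] V_0 unfolding gamma_min_def by simp

lemma succ_cm_nonneg: "0 \<le> succ (cm j)"
  using cm_nonneg[of j] succ_gt[of "cm j"] by linarith

lemma gm_Suc: "gm (Suc j) = V (succ (cm j))"
  using last_corner[OF succ_cm_nonneg refl] unfolding gamma_min_def by simp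

lemma succ_cm_le: "succ (cm j) \<le> cm (Suc j)"
  using last_corner[OF succ_cm_nonneg refl] succ_cm_nonneg by simp

lemma cm_strict_mono: "strict_mono cm"
  unfolding strict_mono_Suc_iff using succ_cm_le succ_gt by (meson less_le_trans)

lemma cmax_props: "0 \<le> cmax \<tau> lab i \<and> L (cmax \<tau> lab i) = - int i
   \<and> (\<forall>m. 0 \<le> m \<and> m < cmax \<tau> lab i \<longrightarrow> - int i < L m)"
proof (induction i)
  case 0 then show ?case unfolding cmax_def using V_0 lab_root by simp
next
  case (Suc i)
  let ?c = "cmax \<tau> lab i"
  have "- int (Suc i) < L m" if "0 \<le> m" "m < succ ?c" for m
  proof (cases "m \<le> ?c")
    case True
    then show ?thesis using Suc that by (cases "m = ?c") auto
  next
    case False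
    then show ?thesis using L_between_succ[of ?c m] Suc that by simp
  qed
  then show ?case using Suc succ_gt[of ?c] L_succ[of ?c] by (simp add: cmax_def)
qed

section \<open>Paths along successor arcs\<close>

text \<open>The minimal geodesic and every proper geodesic ray are successor paths; for a
  ray the decreasing labels force each arc to be traversed from a corner to its
  successor.\<close>

definition successor_path :: "(nat \<Rightarrow> nat list) \<Rightarrow> bool" where
  "successor_path g \<longleftrightarrow> g 0 = [] \<and> (\<forall>i. lab (g i) = - int i)
     \<and> (\<forall>i. \<exists>n. V n = g i \<and> V (succ n) = g (Suc i))"

text \<open>The contour enters the subtree of \<open>w\<close> through \<open>w\<close> itself, whose label is too
  low to occur strictly between \<open>c\<close> and its successor.\<close>

lemma succ_enters_lower_subtree_at_root:
  assumes "lab w < L c" "\<not> prefix w (V c)" "prefix w (V (succ c))"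
  shows "V (succ c) = w"
proof (rule ccontr)
  assume ne: "V (succ c) \<noteq> w"
  obtain y where y: "c < y" "y \<le> succ c" "V y = w" using contour_enters[OF succ_gt assms(2,3)] by blast
  then have "y < succ c" using ne by (cases "y = succ c") auto
  then have "L c \<le> L y" using L_between_succ y(1) by blast
  then show False using y(3) assms(1) by simp
qed

lemma successor_path_low_not_strict_prefix:
  assumes "successor_path g"
  shows "lab w \<le> - int i \<Longrightarrow> \<not> strict_prefix w (g i)"
proof (induction i)
  case 0 then show ?case using assms unfolding successor_path_def by simp
next
  case (Suc i)
  have lab_g: "lab (g i) = - int i" and
    step: "\<exists>n. V n = g i \<and> V (succ n) = g (Suc i)"
    using assms unfolding successor_path_def by auto
  show ?case
  proof
    assume sp: "strict_prefix w (g (Suc i))"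
    obtain n where n: "V n = g i" "V (succ n) = g (Suc i)" using step by blast
    have "g i \<noteq> w" using lab_g Suc.prems by auto
    then have "\<not> prefix w (V n)" using Suc n by (simp add: strict_prefix_def)
    moreover have "lab w < L n" using lab_g n Suc.prems by simp
    moreover have "prefix w (V (succ n))" "V (succ n) \<noteq> w" using sp n by (auto simp: strict_prefix_def)
    ultimately show False using succ_enters_lower_subtree_at_root by blast
  qed
qed

lemma successor_path_gamma_min: "successor_path gm"
  unfolding successor_path_def
  using gm_0 L_cm gm_Suc by (auto simp: gamma_min_def)

lemma successor_path_lab_neq: "successor_path g \<Longrightarrow> i \<noteq> k \<Longrightarrow> g i \<noteq> g k"
  unfolding successor_path_def by (metis of_nat_eq_iff neg_equal_iff_equal)

lemma successor_path_not_prefix_earlier: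
  assumes "successor_path g" "i < k"
  shows "\<not> prefix (g k) (g i)"
proof
  assume p: "prefix (g k) (g i)"
  then have "strict_prefix (g k) (g i)"
    using successor_path_lab_neq[OF assms(1)] assms(2) by (simp add: strict_prefix_def)
  moreover have "lab (g k) \<le> - int i"
    using assms unfolding successor_path_def by simp
  ultimately show False using successor_path_low_not_strict_prefix[OF assms(1)] by blast
qed

lemma tree_path_root: "tree_path [] b = {w. prefix w b}"
  unfolding tree_path_def by auto

lemma tree_path_prefix: "prefix y g \<Longrightarrow> tree_path y g = {w. prefix y w \<and> prefix w g}"
proof -
  assume p: "prefix y g"
  have "longest_common_prefix y g = y"
    using longest_common_prefix_max_prefix[OF prefix_order.refl p] longest_common_prefix_prefix1[of y g]
    by (simp add: prefix_order.antisym)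
  then show ?thesis unfolding tree_path_def using p by (auto intro: prefix_order.trans dest: prefix_order.antisym)
qed

lemma tree_path_avoids_spine:
  assumes "prefix y g" "0 \<le> f" "V f = y" "0 \<le> z" "V z = g" "z \<le> f"
  shows "(tree_path y g - {y}) \<inter> range Sp = {}"
proof (rule ccontr)
  assume "\<not> ?thesis"
  then obtain k where w: "prefix y (Sp k)" "prefix (Sp k) g" "Sp k \<noteq> y"
    using tree_path_prefix[OF assms(1)] by auto
  have ys: "y = Sp (length y)" using prefix_Sp_eq w(1) by blast
  have "length y \<noteq> k" using w(3) ys by auto
  then have "length y < k" using prefix_length_le[OF w(1)] by simp
  then have "prefix (Sp (Suc (length y))) (Sp k)" by (simp add: prefix_Sp)
  then have "prefix (Sp (Suc (length y))) g" using w(2) by (rule prefix_order.trans)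
  then have "f < z" using corner_before_spine_child[of f "length y" z] assms ys by simp
  then show False using assms(6) by simp
qed

text \<open>If \<open>gm j1\<close> were a proper ancestor of \<open>gm j2\<close> through an off-spine child \<open>v\<close>,
  the clockwise contour, which must go on to the spine, would leave the subtree of \<open>v\<close>
  after the last corner of \<open>gm j2\<close> and so reach \<open>gm j1\<close> after its own last corner.\<close>

lemma gamma_min_ancestor_unique:
  assumes "j1 < j2" "prefix (gm j1) g" "prefix (gm j2) g"
    and avoids: "(tree_path (gm j1) g - {gm j1}) \<inter> range Sp = {}"
  shows False
proof -
  define y1 y2 where "y1 = gm j1" and "y2 = gm j2"
  have "\<not> prefix y2 y1"
    using successor_path_not_prefix_earlier[OF successor_path_gamma_min assms(1)] y1_def y2_def by simp
  then have "prefix y1 y2" using assms(2,3) y1_def y2_def prefix_same_cases by blast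
  moreover have "y1 \<noteq> y2"
    using successor_path_lab_neq[OF successor_path_gamma_min] assms(1) y1_def y2_def by simp
  ultimately have "strict_prefix y1 y2" by (rule strict_prefixI)
  then obtain c r where y2: "y2 = y1 @ c # r" by (rule strict_prefixE')
  define v where "v = y1 @ [c]"
  have pv: "prefix v y2" unfolding v_def y2 by simp
  then have "prefix v g" using assms(3) y2_def by (metis prefix_order.trans)
  then have "v \<in> tree_path y1 g - {y1}"
    using tree_path_prefix[OF assms(2)] y1_def unfolding v_def by simp
  then have "v \<noteq> Sp (length v)" using avoids y1_def by blast
  then have v_off: "\<not> prefix v (Sp (Suc (length y2)))" using prefix_Sp_eq by blast
  define T where "T = int (spine_time (Suc (length y2)))"
  have c2: "V (cm j2) = y2" unfolding y2_def gamma_min_def ..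
  have cT: "cm j2 < T"
    using corner_index_lt_spine_time[OF cm_nonneg c2] T_def by simp
  have VT: "V T = Sp (Suc (length y2))" using V_of_nat cw_state_spine_time T_def by simp
  obtain x where x: "cm j2 \<le> x" "V (x + 1) = butlast v"
    using contour_exits[OF cT] pv v_off c2 VT by auto
  have "x + 1 \<le> cm j1"
    using cm_greatest[of "x + 1" j1] x cm_nonneg[of j2] y1_def unfolding v_def by simp
  then show False using strict_monoD[OF cm_strict_mono assms(1)] x by simp
qed

text \<open>Otherwise the counterclockwise contour leaves the subtree of \<open>V (succ n)\<close>, which
  happens only for right-side vertices off the spine, while \<open>d\<close> puts that vertex on
  the left-hand side.\<close>

lemma right_arc_ends_at_ancestor:
  assumes "succ n < 0" "0 \<le> d" "V d = V (succ n)"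
  shows "prefix (V (succ n)) (V n)"
proof (rule ccontr)
  assume np: "\<not> prefix (V (succ n)) (V n)"
  define a b where "a = nat (- succ n)" and "b = nat (- n)"
  have ea: "succ n = - int a" and eb: "n = - int b"
    using assms(1) succ_gt[of n] unfolding a_def b_def by auto
  have "a < b" using ea eb succ_gt[of n] by simp
  moreover have "prefix (V (succ n)) (fst (ccw_state a))" using V_uminus_of_nat[of a] ea by simp
  moreover have "\<not> prefix (V (succ n)) (fst (ccw_state b))" using np V_uminus_of_nat[of b] eb by simp
  ultimately obtain t where "ccw_state t = (V (succ n), 0)" using ccw_exits by blast
  then have "V (succ n) \<noteq> Sp (length (V (succ n)))" and "right_of_spine (V (succ n))"
    using ccw_exit_right_off_spine by blast+
  moreover have "left_of_spine (V (succ n))"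
    using cw_inv_cw_state[of "nat d"] V_of_nat[of "nat d"] assms(2,3) unfolding cw_inv_def by simp
  ultimately show False using left_right_of_spine_eq by blast
qed

end

locale SS_geodesic = SS_tree +
  fixes \<eta> :: nat and \<gamma> :: "nat \<Rightarrow> nat list"
  assumes geo: "proper_geodesic_ray lab (Phi \<tau> lab \<eta>) \<gamma>"
begin

lemma gamma_0: "\<gamma> 0 = []" using geo unfolding proper_geodesic_ray_def by simp
lemma lab_gamma: "lab (\<gamma> i) = - int i" using geo unfolding proper_geodesic_ray_def by simp

lemma successor_path_gamma: "successor_path \<gamma>"
  unfolding successor_path_def
proof (intro conjI allI gamma_0 lab_gamma)
  fix i
  have arcs: "q_arcs (Phi \<tau> lab \<eta>) = {(V n, V (succ n)) | n. True}"
    unfolding q_arcs_def Phi_def by simp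
  have "(\<gamma> i, \<gamma> (Suc i)) \<in> q_arcs (Phi \<tau> lab \<eta>) \<or> (\<gamma> (Suc i), \<gamma> i) \<in> q_arcs (Phi \<tau> lab \<eta>)"
    using geo unfolding proper_geodesic_ray_def by blast
  moreover have "(\<gamma> (Suc i), \<gamma> i) \<notin> q_arcs (Phi \<tau> lab \<eta>)"
    using L_succ lab_gamma[of i] lab_gamma[of "Suc i"] unfolding arcs by force
  ultimately show "\<exists>n. V n = \<gamma> i \<and> V (succ n) = \<gamma> (Suc i)" unfolding arcs by auto
qed

lemma gamma_not_in_root_path: "i < k \<Longrightarrow> \<gamma> k \<notin> tree_path [] (\<gamma> i)"
  using successor_path_not_prefix_earlier[OF successor_path_gamma] tree_path_root by simp

lemma cmax_le_corner_gamma: "0 \<le> n \<Longrightarrow> V n = \<gamma> i \<Longrightarrow> cmax \<tau> lab i \<le> n"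
  using cmax_props[of i] lab_gamma[of i] by (metis less_irrefl not_le)

text \<open>The arc leaving the last corner of \<open>gm i\<close> ends no earlier than the arc used by
  \<open>\<gamma>\<close>, so a later corner of \<open>\<gamma> (Suc i)\<close> would make \<open>\<gamma> (Suc i)\<close> a proper ancestor of
  \<open>gm (Suc i)\<close> (arc from the left side) or of \<open>\<gamma> i\<close> (arc within the right side).\<close>

lemma corner_gamma_le_cmin: "V n = \<gamma> i \<Longrightarrow> n \<le> cm i"
proof (induction i arbitrary: n)
  case 0
  then show ?case using cm_greatest[of n 0] gm_0 gamma_0 cm_nonneg[of 0] by (cases "0 \<le> n") auto
next
  case (Suc i)
  let ?w = "\<gamma> (Suc i)"
  show ?case
  proof (rule ccontr)
    assume "\<not> n \<le> cm (Suc i)"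
    then have n_gt: "cm (Suc i) < n" and n_nonneg: "0 \<le> n" using cm_nonneg[of "Suc i"] by auto
    obtain n' where n': "V n' = \<gamma> i" "V (succ n') = ?w"
      using successor_path_gamma unfolding successor_path_def by blast
    have "n' \<le> cm i" "L n' = L (cm i)" using Suc.IH n'(1) lab_gamma L_cm by auto
    then have "succ n' \<le> succ (cm i)" by (rule succ_mono)
    moreover have "gm (Suc i) \<noteq> ?w" using cm_greatest[OF n_nonneg, of "Suc i"] Suc.prems n_gt by auto
    ultimately have lt: "succ n' < succ (cm i)" using n'(2) gm_Suc by (metis order_le_less)
    have low: "lab ?w \<le> - int (Suc i)" using lab_gamma by simp
    show False
    proof (cases "0 \<le> succ n'")
      case True
      have "succ (cm i) < n" using succ_cm_le n_gt by (meson le_less_trans)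
      then have "prefix ?w (gm (Suc i))"
        using prefix_V_between[OF True lt _ n'(2)] Suc.prems gm_Suc by simp
      then have "strict_prefix ?w (gm (Suc i))" using \<open>gm (Suc i) \<noteq> ?w\<close> by (simp add: strict_prefix_def)
      then show False using successor_path_low_not_strict_prefix[OF successor_path_gamma_min low] by blast
    next
      case False
      then have "prefix ?w (\<gamma> i)"
        using right_arc_ends_at_ancestor[of n' n] n' n_nonneg Suc.prems by simp
      then show False using successor_path_not_prefix_earlier[OF successor_path_gamma] by blast
    qed
  qed
qed

lemma gamma_min_ancestor_ex:
  assumes "0 \<le> z" "V z = \<gamma> i"
  shows "\<exists>j. j \<le> i \<and> prefix (gm j) (\<gamma> i) \<and> z \<le> cm j"
proof -
  have zi: "z \<le> cm i" using corner_gamma_le_cmin assms(2) by simp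
  define j0 where "j0 = (LEAST j. z \<le> cm j)"
  have j0i: "j0 \<le> i" unfolding j0_def using zi by (rule Least_le)
  have zj0: "z \<le> cm j0" unfolding j0_def using zi by (rule LeastI)
  have "prefix (gm j0) (\<gamma> i)"
  proof (cases j0)
    case 0 then show ?thesis using gm_0 by simp
  next
    case (Suc j')
    have "\<not> z \<le> cm j'" using not_less_Least[of j' "\<lambda>j. z \<le> cm j"] Suc j0_def by simp
    then have pz: "cm j' < z" by simp
    define m where "m = succ (cm j')"
    have Vm: "V m = gm j0" using gm_Suc[of j'] Suc m_def by simp
    have mf: "m \<le> cm j0" using succ_cm_le[of j'] Suc m_def by simp
    have mz: "m \<le> z"
    proof (rule ccontr)
      assume "\<not> m \<le> z"
      then have "L (cm j') \<le> L z" using L_between_succ pz m_def by simp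
      then show False using L_cm[of j'] lab_gamma[of i] assms(2) j0i Suc by simp
    qed
    show ?thesis
    proof (cases "z = m \<or> z = cm j0")
      case True
      then show ?thesis using Vm assms(2) unfolding gamma_min_def by auto
    next
      case False
      then have "m < z" "z < cm j0" using mz zj0 by auto
      then show ?thesis using prefix_V_between[of m z "cm j0" "gm j0"] Vm assms(2) succ_cm_nonneg m_def
        unfolding gamma_min_def by simp
    qed
  qed
  then show ?thesis using j0i zj0 by blast
qed

lemma unique_gamma_min_ancestor:
  assumes "0 \<le> z" "V z = \<gamma> i"
  shows "\<exists>!j. j \<le> i \<and> gm j \<in> tree_path [] (\<gamma> i)
                \<and> (tree_path (gm j) (\<gamma> i) - {gm j}) \<inter> range Sp = {}"
proof -
  obtain j where j: "j \<le> i" "prefix (gm j) (\<gamma> i)" "z \<le> cm j"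
    using gamma_min_ancestor_ex[OF assms] by blast
  have avoids: "(tree_path (gm j) (\<gamma> i) - {gm j}) \<inter> range Sp = {}"
    using tree_path_avoids_spine[OF j(2) cm_nonneg _ assms j(3)] by (simp add: gamma_min_def)
  show ?thesis
  proof (rule ex1I[of _ j])
    show "j \<le> i \<and> gm j \<in> tree_path [] (\<gamma> i) \<and> (tree_path (gm j) (\<gamma> i) - {gm j}) \<inter> range Sp = {}"
      using j(1,2) avoids by (simp add: tree_path_root)
  next
    fix j' assume "j' \<le> i \<and> gm j' \<in> tree_path [] (\<gamma> i)
                \<and> (tree_path (gm j') (\<gamma> i) - {gm j'}) \<inter> range Sp = {}"
    then have "prefix (gm j') (\<gamma> i)" and "(tree_path (gm j') (\<gamma> i) - {gm j'}) \<inter> range Sp = {}"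
      by (simp_all add: tree_path_root)
    then have "\<not> j' < j" "\<not> j < j'"
      using gamma_min_ancestor_unique[of _ _ "\<gamma> i"] j(2) avoids by blast+
    then show "j' = j" by simp
  qed
qed

end

theorem lemma2:
  fixes \<tau> :: "nat list set" and lab :: "nat list \<Rightarrow> int" and \<eta> :: nat
    and \<gamma> :: "nat \<Rightarrow> nat list"
  assumes "in_SS \<tau> lab"
    and "\<eta> \<in> {0, 1}"
    and "proper_geodesic_ray lab (Phi \<tau> lab \<eta>) \<gamma>"
  shows "(\<forall>i n. 0 \<le> n \<longrightarrow> corner_vertex \<tau> n = \<gamma> i \<longrightarrow>
              cmax \<tau> lab i \<le> n \<and> n \<le> cmin \<tau> lab i)
    \<and> (\<forall>i k. i < k \<longrightarrow> \<gamma> k \<notin> tree_path [] (\<gamma> i))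
    \<and> (\<forall>i. (\<exists>n\<ge>0. corner_vertex \<tau> n = \<gamma> i) \<longrightarrow>
          (\<exists>!j. j \<le> i \<and> gamma_min \<tau> lab j \<in> tree_path [] (\<gamma> i)
                \<and> (tree_path (gamma_min \<tau> lab j) (\<gamma> i) - {gamma_min \<tau> lab j})
                    \<inter> range (spine \<tau>) = {}))"
proof -
  interpret SS_geodesic \<tau> lab \<eta> \<gamma>
    by (intro SS_geodesic.intro SS_tree.intro SS_geodesic_axioms.intro assms(1,3))
  show ?thesis
  proof (intro conjI allI impI)
    show "cmax \<tau> lab i \<le> n" if "0 \<le> n" "corner_vertex \<tau> n = \<gamma> i" for i n
      using that by (rule cmax_le_corner_gamma)
    show "n \<le> cmin \<tau> lab i" if "0 \<le> n" "corner_vertex \<tau> n = \<gamma> i" for i n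
      using that(2) by (rule corner_gamma_le_cmin)
    show "\<gamma> k \<notin> tree_path [] (\<gamma> i)" if "i < k" for i k
      using that by (rule gamma_not_in_root_path)
    show "\<exists>!j. j \<le> i \<and> gamma_min \<tau> lab j \<in> tree_path [] (\<gamma> i)
                \<and> (tree_path (gamma_min \<tau> lab j) (\<gamma> i) - {gamma_min \<tau> lab j})
                    \<inter> range (spine \<tau>) = {}"
      if "\<exists>n\<ge>0. corner_vertex \<tau> n = \<gamma> i" for i
      using that by (elim exE conjE) (rule unique_gamma_min_ancestor)
  qed
qed

end
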